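(* Let $p$ be a prime and $m\ge 3$, and let $\mathcal{G}$ be the set of all groups isomorphic to either $D_1=\mathbb{Z}_p^m$ or $D_2=\mathbb{Z}_p^{m-2}\times\mathbb{Z}_{p^2}$. Any deterministic algorithm that determines whether a given $G\in\mathcal{G}$ is isomorphic to $D_1$ or to $D_2$ must access the elements of $G$ and its Cayley table at least $\Omega(p^{m-2})=\Omega(|G|/p^2)$ times.
   Context: The element sets of the groups in $\mathcal{G}$ are subsets of a fixed countable set. The algorithm accesses elements of $G$ one at a time and queries the Cayley table on elements it has obtained; each such access counts as one access. *)

theory Defs
  imports "HOL-Algebra.Algebra" "HOL-Computational_Algebra.Primes"
begin

definition D1 :: "nat \<Rightarrow> nat \<Rightarrow> (nat \<Rightarrow> int) monoid" where
  "D1 p m = product_group {..<m} (\<lambda>_. integer_mod_group p)"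

definition D2 :: "nat \<Rightarrow> nat \<Rightarrow> (nat \<Rightarrow> int) monoid" where
  "D2 p m = product_group {..<m - 1}
     (\<lambda>i. if i = 0 then integer_mod_group (p ^ 2) else integer_mod_group p)"

text \<open>The input is a group G with carrier a finite set of naturals together with an
  enumeration es of its elements; the algorithm accesses the elements one at a time
  in that order (query Next, answer None once all elements were accessed), and may
  query the Cayley table on the i-th and j-th elements it has accessed
  (query Mult i j). Every query counts as one access.\<close>
datatype query = Next | Mult nat nat

datatype action = Ask query | Decide bool

type_synonym history = "(query \<times> nat option) list"

type_synonym algorithm = "history \<Rightarrow> action"

definition accessed :: "history \<Rightarrow> nat list" where
  "accessed h = [a. (q, Some a) \<leftarrow> h, q = Next]"

fun answer :: "nat monoid \<Rightarrow> nat list \<Rightarrow> history \<Rightarrow> query \<Rightarrow> nat option" where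
  "answer G es h Next =
     (let k = length (accessed h) in if k < length es then Some (es ! k) else None)"
| "answer G es h (Mult i j) =
     (let acc = accessed h in
      if i < length acc \<and> j < length acc then Some (acc ! i \<otimes>\<^bsub>G\<^esub> acc ! j) else None)"

primrec hist :: "algorithm \<Rightarrow> nat monoid \<Rightarrow> nat list \<Rightarrow> nat \<Rightarrow> history" where
  "hist A G es 0 = []"
| "hist A G es (Suc k) =
     (case A (hist A G es k) of
        Ask q \<Rightarrow> hist A G es k @ [(q, answer G es (hist A G es k) q)]
      | Decide b \<Rightarrow> hist A G es k)"

definition decides :: "algorithm \<Rightarrow> nat monoid \<Rightarrow> nat list \<Rightarrow> nat \<Rightarrow> bool \<Rightarrow> bool" where
  "decides A G es k b \<longleftrightarrow>
     (\<forall>i<k. \<exists>q. A (hist A G es i) = Ask q) \<and> A (hist A G es k) = Decide b"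

definition valid_input :: "nat monoid \<Rightarrow> nat list \<Rightarrow> bool" where
  "valid_input G es \<longleftrightarrow> group G \<and> distinct es \<and> set es = carrier G"

end

theory Submission
  imports Defs
begin

text \<open>Adversary argument. Both groups contain a copy of (Z/p)^(m-2). Encode the two groups
  by natural numbers so that the two copies receive the same codes (hence the same Cayley table),
  and list the elements of the copy first. Until an algorithm has accessed all p^(m-2)
  elements of the copy, every answer it receives is the same on both inputs, so it cannot have
  stopped yet: it must answer differently on them, since \<open>D1\<close> has exponent \<open>p\<close> while \<open>D2\<close>
  does not.\<close>

definition agree_on_prefix :: "nat \<Rightarrow> nat monoid \<Rightarrow> nat list \<Rightarrow> nat monoid \<Rightarrow> nat list \<Rightarrow> bool" where
  "agree_on_prefix N G es G' es' \<longleftrightarrow>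
     N \<le> length es \<and> N \<le> length es' \<and> take N es = take N es' \<and>
     (\<forall>a\<in>set (take N es). \<forall>b\<in>set (take N es). a \<otimes>\<^bsub>G\<^esub> b = a \<otimes>\<^bsub>G'\<^esub> b)"

lemma accessed_snoc:
  "accessed (h @ [(q, r)]) = accessed h @ (if q = Next then (case r of Some a \<Rightarrow> [a] | None \<Rightarrow> []) else [])"
  by (cases r) (auto simp: accessed_def)

lemma accessed_hist_eq_take: "\<exists>n\<le>i. accessed (hist A G es i) = take n es"
proof (induction i)
  case 0
  then show ?case by (simp add: accessed_def)
next
  case (Suc i)
  then obtain n where n: "n \<le> i" "accessed (hist A G es i) = take n es" by blast
  show ?case
  proof (cases "A (hist A G es i)")
    case (Ask q)
    then have "accessed (hist A G es (Suc i)) \<in> {take n es, take (Suc n) es}"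
      using n by (cases q) (auto simp: accessed_snoc Let_def take_Suc_conv_app_nth)
    then show ?thesis using n by (metis Suc_le_mono insertE le_SucI singletonD)
  next
    case Decide
    then show ?thesis using n by (intro exI[of _ n]) simp
  qed
qed

lemma hist_eq_if_agree_on_prefix:
  assumes "agree_on_prefix N G es G' es'" "i \<le> N"
  shows "hist A G es i = hist A G' es' i"
  using \<open>i \<le> N\<close>
proof (induction i)
  case 0
  then show ?case by simp
next
  case (Suc i)
  then have IH: "hist A G es i = hist A G' es' i" by simp
  obtain n where n: "n \<le> i" "accessed (hist A G es i) = take n es"
    using accessed_hist_eq_take by blast
  have "n < N" using n Suc.prems by simp
  have prefix: "take n es = take n es'" "n < length es" "set (take n es) \<subseteq> set (take N es)"
    using assms(1) \<open>n < N\<close> unfolding agree_on_prefix_def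
    by (metis min.absorb1 less_imp_le take_take, linarith, metis less_imp_le set_take_subset_set_take)
  have "answer G es (hist A G es i) q = answer G' es' (hist A G es i) q" for q
  proof (cases q)
    case Next
    then show ?thesis using n prefix assms(1) \<open>n < N\<close>
      by (simp add: Let_def agree_on_prefix_def) (metis nth_take)
  next
    case Mult
    have "x \<otimes>\<^bsub>G\<^esub> y = x \<otimes>\<^bsub>G'\<^esub> y" if "x \<in> set (take n es)" "y \<in> set (take n es)" for x y
      using that prefix(3) assms(1) unfolding agree_on_prefix_def by blast
    moreover have "es ! j \<in> set (take n es)" if "j < n" "j < length es" for j
      using that by (metis length_take min_less_iff_conj nth_mem nth_take)
    ultimately show ?thesis using Mult n(2) by (auto simp: Let_def)
  qed
  then show ?case using IH by (cases "A (hist A G es i)") simp_all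
qed

lemma decides_unique:
  assumes "decides A G es k b" "decides A G es k' b'"
  shows "k = k' \<and> b = b'"
  using assms unfolding decides_def by (metis action.distinct(1) action.inject(2) linorder_cases)

lemma decides_cong:
  assumes "\<And>i. i \<le> k \<Longrightarrow> hist A G es i = hist A G' es' i"
  shows "decides A G es k b \<longleftrightarrow> decides A G' es' k b"
  using assms by (simp add: decides_def)

lemma decides_lower_bound:
  assumes "agree_on_prefix N G es G' es'"
    and "decides A G es k b" "decides A G' es' k' b'" "b \<noteq> b'"
  shows "N \<le> k"
proof (rule ccontr)
  assume "\<not> N \<le> k"
  then have "decides A G' es' k b"
    using decides_cong hist_eq_if_agree_on_prefix[OF assms(1)] assms(2)
    by (metis le_trans nat_le_linear)
  then show False using decides_unique assms(3,4) by blast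
qed

definition transport_group :: "('a \<Rightarrow> 'b) \<Rightarrow> 'a monoid \<Rightarrow> 'b monoid" where
  "transport_group f D =
     \<lparr>carrier = f ` carrier D,
      monoid.mult = (\<lambda>a b. f (inv_into (carrier D) f a \<otimes>\<^bsub>D\<^esub> inv_into (carrier D) f b)),
      one = f \<one>\<^bsub>D\<^esub>\<rparr>"

lemma transport_group_mult:
  assumes "inj_on f (carrier D)" "x \<in> carrier D" "y \<in> carrier D"
  shows "f x \<otimes>\<^bsub>transport_group f D\<^esub> f y = f (x \<otimes>\<^bsub>D\<^esub> y)"
  using assms by (simp add: transport_group_def)

lemma transport_group_iso:
  assumes "group D" "inj_on f (carrier D)"
  shows "f \<in> iso D (transport_group f D)"
  using assms
  by (auto simp: iso_def hom_def bij_betw_def transport_group_mult monoid.m_closed group.is_monoid)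
    (auto simp: transport_group_def)

lemma group_transport_group:
  assumes "group D" "inj_on f (carrier D)"
  shows "group (transport_group f D)"
proof -
  have "f \<in> hom D (transport_group f D)"
    using transport_group_iso[OF assms] by (rule iso_imp_homomorphism)
  then have "group ((transport_group f D)\<lparr>carrier := f ` carrier D, one := f \<one>\<^bsub>D\<^esub>\<rparr>)"
    by (rule group.hom_imp_img_group[OF assms(1)])
  then show ?thesis by (simp add: transport_group_def)
qed

lemma valid_input_listing_first:
  assumes "group G" "finite (carrier G)" "S \<subseteq> carrier G"
  shows "valid_input G (sorted_list_of_set S @ sorted_list_of_set (carrier G - S))"
  using assms finite_subset[OF assms(3,2)] by (auto simp: valid_input_def)

lemma obtain_compatible_encodings:
  assumes "finite A" "finite B" "H \<subseteq> A" "inj_on \<phi> H" "\<phi> ` H \<subseteq> B"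
  obtains f :: "'a \<Rightarrow> nat" and g :: "'b \<Rightarrow> nat"
  where "inj_on f A" "inj_on g B" "\<And>x. x \<in> H \<Longrightarrow> g (\<phi> x) = f x"
proof -
  obtain f0 :: "'a \<Rightarrow> nat" where f0: "inj_on f0 A"
    using finite_imp_inj_to_nat_seg[OF assms(1)] by blast
  obtain g0 :: "'b \<Rightarrow> nat" where g0: "inj_on g0 B"
    using finite_imp_inj_to_nat_seg[OF assms(2)] by blast
  define f where "f x = 2 * f0 x" for x
  define g where "g y = (if y \<in> \<phi> ` H then f (inv_into H \<phi> y) else 2 * g0 y + 1)" for y
  have "inj_on f A" using f0 by (simp add: f_def inj_on_def)
  moreover have "inj_on g B"
  proof (rule inj_onI)
    fix y y' assume "y \<in> B" "y' \<in> B" and eq: "g y = g y'"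
    show "y = y'"
    proof (cases "y \<in> \<phi> ` H"; cases "y' \<in> \<phi> ` H")
      assume "y \<in> \<phi> ` H" "y' \<in> \<phi> ` H"
      moreover have "inv_into H \<phi> y \<in> A" "inv_into H \<phi> y' \<in> A"
        using calculation assms(3) by (meson inv_into_into subsetD)+
      ultimately show ?thesis
        using eq f0 by (auto simp: g_def f_def inj_on_def intro: inv_into_injective)
    next
      assume "y \<notin> \<phi> ` H" "y' \<notin> \<phi> ` H"
      then show ?thesis using eq g0 \<open>y \<in> B\<close> \<open>y' \<in> B\<close> by (simp add: g_def inj_on_def)
    qed (use eq in \<open>simp add: g_def f_def; presburger\<close>)+
  qed
  moreover have "g (\<phi> x) = f x" if "x \<in> H" for x
    using that assms(4) by (simp add: g_def)
  ultimately show thesis using that by blast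
qed

lemma obtain_inputs_agreeing_on_subgroup:
  fixes D :: "'a monoid" and D' :: "'b monoid"
  assumes "group D" "group D'" "finite (carrier D)" "finite (carrier D')"
    and "subgroup H D" "\<phi> \<in> hom (D\<lparr>carrier := H\<rparr>) D'" "inj_on \<phi> H"
  obtains G es G' es'
  where "valid_input G es" "G \<cong> D" "valid_input G' es'" "G' \<cong> D'"
    "agree_on_prefix (card H) G es G' es'"
proof -
  have H: "H \<subseteq> carrier D" using assms(5) by (rule subgroup.subset)
  have \<phi>_mult: "\<phi> (x \<otimes>\<^bsub>D\<^esub> y) = \<phi> x \<otimes>\<^bsub>D'\<^esub> \<phi> y" if "x \<in> H" "y \<in> H" for x y
    using assms(6) that by (simp add: hom_def)
  have "\<phi> ` H \<subseteq> carrier D'" using assms(6) by (auto simp: hom_def)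
  then obtain f :: "'a \<Rightarrow> nat" and g :: "'b \<Rightarrow> nat"
    where f: "inj_on f (carrier D)" and g: "inj_on g (carrier D')"
    and g\<phi>: "\<And>x. x \<in> H \<Longrightarrow> g (\<phi> x) = f x"
    using obtain_compatible_encodings[OF assms(3,4) H assms(7)] by blast
  define G where "G = transport_group f D"
  define G' where "G' = transport_group g D'"
  define S where "S = f ` H"
  define es where "es = sorted_list_of_set S @ sorted_list_of_set (carrier G - S)"
  define es' where "es' = sorted_list_of_set S @ sorted_list_of_set (carrier G' - S)"
  have S_G: "S \<subseteq> carrier G" using H by (auto simp: S_def G_def transport_group_def)
  have "S = g ` \<phi> ` H"
    unfolding S_def image_image using g\<phi> by (rule image_cong[OF refl, symmetric])
  then have "S \<subseteq> carrier G'" using \<open>\<phi> ` H \<subseteq> carrier D'\<close> by (auto simp: G'_def transport_group_def)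
  moreover have "finite (carrier G)" "finite (carrier G')"
    using assms(3,4) by (simp_all add: G_def G'_def transport_group_def)
  ultimately have "valid_input G es" "valid_input G' es'"
    using valid_input_listing_first S_G group_transport_group assms(1,2) f g
    unfolding es_def es'_def G_def G'_def by blast+
  moreover have "G \<cong> D" "G' \<cong> D'"
    using group.iso_sym[OF assms(1) is_isoI[OF transport_group_iso[OF assms(1) f]]]
      group.iso_sym[OF assms(2) is_isoI[OF transport_group_iso[OF assms(2) g]]]
    by (simp_all add: G_def G'_def)
  moreover have "agree_on_prefix (card H) G es G' es'"
  proof -
    have card_S: "card S = card H" using inj_on_subset[OF f H] by (simp add: S_def card_image)
    have "a \<otimes>\<^bsub>G\<^esub> b = a \<otimes>\<^bsub>G'\<^esub> b" if ab: "a \<in> S" "b \<in> S" for a b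
    proof -
      obtain x y where xy: "x \<in> H" "y \<in> H" "a = f x" "b = f y" using ab by (auto simp: S_def)
      then have "x \<otimes>\<^bsub>D\<^esub> y \<in> H" using assms(5) by (simp add: subgroup.m_closed)
      have "a \<otimes>\<^bsub>G\<^esub> b = f (x \<otimes>\<^bsub>D\<^esub> y)"
        using xy H f by (simp add: G_def transport_group_mult subsetD)
      also have "\<dots> = g (\<phi> x \<otimes>\<^bsub>D'\<^esub> \<phi> y)"
        using g\<phi>[OF \<open>x \<otimes>\<^bsub>D\<^esub> y \<in> H\<close>] \<phi>_mult[OF xy(1,2)] by simp
      also have "\<dots> = a \<otimes>\<^bsub>G'\<^esub> b"
        using xy g \<open>\<phi> ` H \<subseteq> carrier D'\<close>
        by (simp add: G'_def transport_group_mult g\<phi>[symmetric] image_subset_iff)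
      finally show ?thesis .
    qed
    then show ?thesis
      using finite_subset[OF S_G \<open>finite (carrier G)\<close>] card_S
      by (simp add: agree_on_prefix_def es_def es'_def)
  qed
  ultimately show thesis using that by blast
qed

lemma nat_pow_product_group:
  "x \<in> carrier (product_group I G) \<Longrightarrow>
   x [^]\<^bsub>product_group I G\<^esub> (n::nat) = (\<lambda>i\<in>I. x i [^]\<^bsub>G i\<^esub> n)"
  by (induction n) (auto simp: PiE_iff intro!: restrict_ext)

lemma iso_pow_eq_one:
  assumes "group G" "group H" "G \<cong> H" "\<And>y. y \<in> carrier H \<Longrightarrow> y [^]\<^bsub>H\<^esub> (n::nat) = \<one>\<^bsub>H\<^esub>"
    and "x \<in> carrier G"
  shows "x [^]\<^bsub>G\<^esub> n = \<one>\<^bsub>G\<^esub>"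
proof -
  obtain h where h: "h \<in> iso G H" using assms(3) by (auto simp: is_iso_def)
  then have hom: "h \<in> hom G H" and inj: "inj_on h (carrier G)" by (simp_all add: iso_iff)
  have "h (x [^]\<^bsub>G\<^esub> n) = h \<one>\<^bsub>G\<^esub>"
    using assms hom by (simp add: hom_nat_pow hom_one hom_in_carrier)
  then show ?thesis
    using inj assms(1,5) by (simp add: inj_on_eq_iff group.is_monoid monoid.nat_pow_closed)
qed

lemma group_D1: "group (D1 p m)"
  by (simp add: D1_def)

lemma group_D2: "group (D2 p m)"
  by (simp add: D2_def)

lemma finite_carrier_D1: "p > 0 \<Longrightarrow> finite (carrier (D1 p m))"
  by (simp add: D1_def carrier_integer_mod_group finite_PiE)

lemma finite_carrier_D2: "p > 0 \<Longrightarrow> finite (carrier (D2 p m))"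
  by (simp add: D2_def carrier_integer_mod_group finite_PiE)

lemma D1_pow_eq_one: "x \<in> carrier (D1 p m) \<Longrightarrow> x [^]\<^bsub>D1 p m\<^esub> p = \<one>\<^bsub>D1 p m\<^esub>"
  unfolding D1_def by (simp add: nat_pow_product_group)

lemma D2_pow_neq_one:
  assumes "p > 1" "m \<ge> 2"
  shows "\<exists>x\<in>carrier (D2 p m). x [^]\<^bsub>D2 p m\<^esub> p \<noteq> \<one>\<^bsub>D2 p m\<^esub>"
proof
  define x where "x = (\<lambda>i\<in>{..<m - 1}. if i = 0 then (1::int) else 0)"
  have "p < p ^ 2" using assms by (simp add: power2_eq_square)
  then show "x \<in> carrier (D2 p m)" using assms
    by (auto simp: D2_def x_def carrier_integer_mod_group)
  then have "(x [^]\<^bsub>D2 p m\<^esub> p) 0 = int p"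
    using assms \<open>p < p ^ 2\<close> by (simp add: D2_def nat_pow_product_group x_def)
  then show "x [^]\<^bsub>D2 p m\<^esub> p \<noteq> \<one>\<^bsub>D2 p m\<^esub>"
    using assms by (auto simp: D2_def)
qed

lemma D2_not_iso_D1:
  assumes "p > 1" "m \<ge> 2"
  shows "\<not> D2 p m \<cong> D1 p m"
  using D2_pow_neq_one[OF assms] iso_pow_eq_one[OF group_D2 group_D1 _ D1_pow_eq_one] by blast

text \<open>Coordinate \<open>m - 1\<close> is zero so that dropping it embeds the subgroup into \<open>D2\<close>;
  coordinate 0 is zero so that the image avoids the factor Z/p^2.\<close>
definition shared_subgroup :: "nat \<Rightarrow> nat \<Rightarrow> (nat \<Rightarrow> int) set" where
  "shared_subgroup p m = (\<Pi>\<^sub>E i\<in>{..<m}. if i = 0 \<or> i = m - 1 then {0} else {0..<int p})"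

lemma subgroup_shared_subgroup:
  assumes "p > 0"
  shows "subgroup (shared_subgroup p m) (D1 p m)"
proof -
  have "subgroup (if i = 0 \<or> i = m - 1 then {0} else {0..<int p}) (integer_mod_group p)" for i
    using group.triv_subgroup[of "integer_mod_group p"] group.subgroup_self[of "integer_mod_group p"] assms
    by (simp add: carrier_integer_mod_group)
  then show ?thesis
    by (simp add: D1_def shared_subgroup_def PiE_subgroup_product_group)
qed

lemma card_shared_subgroup:
  assumes "m \<ge> 2"
  shows "card (shared_subgroup p m) = p ^ (m - 2)"
proof -
  have "card (shared_subgroup p m) = (\<Prod>i<m. if i = 0 \<or> i = m - 1 then 1 else p)"
    unfolding shared_subgroup_def by (subst card_PiE) (auto intro!: prod.cong)
  also have "\<dots> = p ^ card ({..<m} \<inter> - {i. i = 0 \<or> i = m - 1})"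
    by (simp add: prod.If_cases)
  also have "{..<m} \<inter> - {i. i = 0 \<or> i = m - 1} = {1..<m - 1}"
    using assms by auto
  finally show ?thesis by (simp add: numeral_2_eq_2)
qed

lemma restrict_hom_shared_subgroup:
  assumes "p > 0"
  shows "(\<lambda>x. restrict x {..<m - 1}) \<in> hom ((D1 p m)\<lparr>carrier := shared_subgroup p m\<rparr>) (D2 p m)"
proof (rule homI)
  fix x assume "x \<in> carrier ((D1 p m)\<lparr>carrier := shared_subgroup p m\<rparr>)"
  then have x: "\<And>i. i < m \<Longrightarrow> x i \<in> (if i = 0 \<or> i = m - 1 then {0} else {0..<int p})"
    by (simp add: shared_subgroup_def PiE_iff)
  have "int p \<le> int (p ^ 2)" using assms by (simp add: power2_eq_square)
  then show "restrict x {..<m - 1} \<in> carrier (D2 p m)"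
    using assms x by (force simp: D2_def carrier_integer_mod_group)
next
  fix x y assume "x \<in> carrier ((D1 p m)\<lparr>carrier := shared_subgroup p m\<rparr>)"
    "y \<in> carrier ((D1 p m)\<lparr>carrier := shared_subgroup p m\<rparr>)"
  then have "\<And>i. i < m \<Longrightarrow> x i \<in> (if i = 0 \<or> i = m - 1 then {0} else {0..<int p})"
    "\<And>i. i < m \<Longrightarrow> y i \<in> (if i = 0 \<or> i = m - 1 then {0} else {0..<int p})"
    by (simp_all add: shared_subgroup_def PiE_iff)
  then have "x 0 = 0" "y 0 = 0" if "m > 0"
    using that by fastforce+
  then show "restrict (x \<otimes>\<^bsub>(D1 p m)\<lparr>carrier := shared_subgroup p m\<rparr>\<^esub> y) {..<m - 1} =
      restrict x {..<m - 1} \<otimes>\<^bsub>D2 p m\<^esub> restrict y {..<m - 1}"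
    by (auto simp: D1_def D2_def fun_eq_iff)
qed

lemma inj_on_restrict_shared_subgroup:
  "inj_on (\<lambda>x. restrict x {..<m - 1}) (shared_subgroup p m)"
proof (rule inj_onI)
  fix x y assume xy: "x \<in> shared_subgroup p m" "y \<in> shared_subgroup p m"
    and eq: "restrict x {..<m - 1} = restrict y {..<m - 1}"
  have "x i = y i" if "i < m" for i
  proof (cases "i < m - 1")
    case True
    then show ?thesis using fun_cong[OF eq, of i] by simp
  next
    case False
    then have "i = m - 1" using that by simp
    then have "x i \<in> {0}" "y i \<in> {0}"
      using that PiE_mem[OF xy(1)[unfolded shared_subgroup_def], of i]
        PiE_mem[OF xy(2)[unfolded shared_subgroup_def], of i] by simp_all
    then show ?thesis by simp
  qed
  then show "x = y"
    using xy by (intro extensionalityI[of _ "{..<m}"]) (auto simp: shared_subgroup_def PiE_def)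
qed

lemma obtain_D1_D2_inputs_agreeing:
  assumes "p > 0" "m \<ge> 2"
  obtains G es G' es'
  where "valid_input G es" "G \<cong> D1 p m" "valid_input G' es'" "G' \<cong> D2 p m"
    "agree_on_prefix (p ^ (m - 2)) G es G' es'"
  using obtain_inputs_agreeing_on_subgroup[OF group_D1 group_D2
      finite_carrier_D1[OF assms(1)] finite_carrier_D2[OF assms(1)]
      subgroup_shared_subgroup[OF assms(1)] restrict_hom_shared_subgroup[OF assms(1)]
      inj_on_restrict_shared_subgroup]
  by (metis card_shared_subgroup[OF assms(2)])

theorem mainTheorem16:
  "\<exists>c::real. c > 0 \<and>
    (\<forall>(p::nat) (m::nat) (A::algorithm).
       Factorial_Ring.prime p \<longrightarrow> 3 \<le> m \<longrightarrow>
       (\<forall>G es. valid_input G es \<and> (G \<cong> D1 p m \<or> G \<cong> D2 p m) \<longrightarrow>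
           (\<exists>k. decides A G es k (G \<cong> D1 p m))) \<longrightarrow>
       (\<exists>G es k b. valid_input G es \<and> (G \<cong> D1 p m \<or> G \<cong> D2 p m) \<and>
           decides A G es k b \<and> real k \<ge> c * real p ^ (m - 2)))"
proof (rule exI[of _ 1], intro conjI allI impI)
  fix p m :: nat and A :: algorithm
  assume "Factorial_Ring.prime p" "3 \<le> m"
    and correct: "\<forall>G es. valid_input G es \<and> (G \<cong> D1 p m \<or> G \<cong> D2 p m) \<longrightarrow>
           (\<exists>k. decides A G es k (G \<cong> D1 p m))"
  then have "p > 1" using prime_gt_1_nat by blast
  then have "p > 0" "m \<ge> 2" using \<open>3 \<le> m\<close> by simp_all
  then obtain G es G' es' where input: "valid_input G es" "G \<cong> D1 p m"
    and input': "valid_input G' es'" "G' \<cong> D2 p m"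
    and agree: "agree_on_prefix (p ^ (m - 2)) G es G' es'"
    by (rule obtain_D1_D2_inputs_agreeing)
  have "\<not> G' \<cong> D1 p m"
  proof
    have "D2 p m \<cong> G'"
      using input' by (simp add: valid_input_def group.iso_sym)
    also assume "G' \<cong> D1 p m"
    finally show False using D2_not_iso_D1 \<open>p > 1\<close> \<open>m \<ge> 2\<close> by blast
  qed
  moreover have "\<exists>k. decides A G es k (G \<cong> D1 p m)" "\<exists>k'. decides A G' es' k' (G' \<cong> D1 p m)"
    using correct input input' by blast+
  ultimately obtain k k' where k: "decides A G es k True" and "decides A G' es' k' False"
    using input(2) by (metis (full_types))
  then have "p ^ (m - 2) \<le> k" using decides_lower_bound[OF agree] by blast
  then show "\<exists>G es k b. valid_input G es \<and> (G \<cong> D1 p m \<or> G \<cong> D2 p m) \<and>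
      decides A G es k b \<and> real k \<ge> 1 * real p ^ (m - 2)"
    using input k by (metis mult_1 of_nat_le_iff of_nat_power)
qed simp

end
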